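(* Let $D$ be a compact state space, let $A,B\subset D$ be disjoint nonempty closed sets with $A\cup B\subsetneq D$, and let $f:D\times D\to[0,\infty)$ satisfy the conditions listed in the context. Let $z^*$ be the $A$-$B$ competency of $f$, and assume that $L_{z^*}$ is $A$-$B$ connected. Then for every $z\in(0,z^*]$, every integer $n\ge N(z)$ and every $0\le i\le n$, \[ W^{n,i}_z=\pi_i\big(\mathbb{G}_n(L_z)\big). \] That is: (1) for every $\alpha\in W^{n,i}_z$ there exists a transition path $\vec\omega=(\omega_0,\dots,\omega_n)\in\mathbb{G}_n(L_z)$ with $\omega_i=\alpha$; and (2) for every $\vec\omega=(\omega_0,\dots,\omega_n)\in\mathbb{G}_n(L_z)$ one has $\omega_j\in W^{n,j}_z$ for all $0\le j\le n$.
   Context: Conditions on $f$: (i) $f(x,y)\ge 0$ for all $(x,y)\in D\times D$, and $f(x,y)=0$ whenever $x\in B$ (and $y\in D$) or whenever $y\in A$ (and $x\in D$); (ii) $f(x,x)=0$ for all $x\in D$; (iii) for every $x\in D\setminus(A\cup B)$, $\int_D f(x,y)\,dy=\int_D f(y,x)\,dy$; (iv) $f$ is bounded and piecewise continuous on $D\times D$. An $A$-$B$ transition path of length $n\in\mathbb{N}$ is a tuple $\vec\omega=(\omega_0,\omega_1,\dots,\omega_n)\in D^{n+1}$ with $\omega_0\in A$, $\omega_n\in B$ and $f(\omega_k,\omega_{k+1})>0$ for $0\le k\le n-1$; its edges are the pairs $(\omega_k,\omega_{k+1})$. For a set $\mathcal C\subset D\times D$, $\mathbb{G}_n(\mathcal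 C)$ denotes the set of all $A$-$B$ transition paths of length $n$ all of whose edges lie in $\mathcal C$, and $\mathcal C$ is called $A$-$B$ connected if $\bigcup_n\mathbb{G}_n(\mathcal C)\neq\emptyset$. For $z\ge0$ let $L_z=\{(x,y)\in D\times D: f(x,y)\ge z\}$. The $A$-$B$ competency of $f$ is $z^*=\sup\{z\ge0: L_z \text{ is } A\text{-}B\text{ connected}\}$. For $z>0$ and $C\subset D$ define $\Phi_z(C)=\bigcup_{x\in C}\{y\in D:(x,y)\in L_z\}$, $\Phi_z^0(C)=C$, $\Phi_z^m(C)=\Phi_z(\Phi_z^{m-1}(C))$. Let $N(z)=\min\{n\ge1:\Phi_z^n(A)\cap B\neq\emptyset\}$. For $n\ge N(z)$ define $W^{n,n}_z=\Phi^n_z(A)\cap B$ and recursively, for $0\le i<n$, $W^{n,i}_z=\{x\in\Phi^i_z(A):\Phi_z(\{x\})\cap W^{n,i+1}_z\neq\emptyset\}$. For $\vec\omega=(\omega_0,\dots,\omega_n)$, $\pi_i(\vec\omega)=\omega_i$ is the canonical projection. *)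

theory Defs
  imports "HOL-Analysis.Analysis"
begin

definition piecewise_continuous_on :: "('a::topological_space \<times> 'a) set \<Rightarrow> ('a \<Rightarrow> 'a \<Rightarrow> real) \<Rightarrow> bool" where
  "piecewise_continuous_on S f \<longleftrightarrow>
     (\<exists>P. finite P \<and> \<Union>P = S \<and> (\<forall>Q\<in>P. continuous_on Q (\<lambda>(x,y). f x y)))"

definition admissible_flux ::
  "'a::euclidean_space set \<Rightarrow> 'a set \<Rightarrow> 'a set \<Rightarrow> ('a \<Rightarrow> 'a \<Rightarrow> real) \<Rightarrow> bool" where
  "admissible_flux D A B f \<longleftrightarrow>
     (\<forall>x\<in>D. \<forall>y\<in>D. f x y \<ge> 0) \<and>
     (\<forall>x\<in>B. \<forall>y\<in>D. f x y = 0) \<and>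
     (\<forall>x\<in>D. \<forall>y\<in>A. f x y = 0) \<and>
     (\<forall>x\<in>D. f x x = 0) \<and>
     (\<forall>x\<in>D - (A \<union> B). (LINT y:D|lborel. f x y) = (LINT y:D|lborel. f y x)) \<and>
     bounded ((\<lambda>(x,y). f x y) ` (D \<times> D)) \<and>
     piecewise_continuous_on (D \<times> D) f"

definition trans_paths ::
  "'a set \<Rightarrow> 'a set \<Rightarrow> 'a set \<Rightarrow> ('a \<Rightarrow> 'a \<Rightarrow> real) \<Rightarrow> nat \<Rightarrow> ('a \<times> 'a) set \<Rightarrow> 'a list set" where
  "trans_paths D A B f n C =
     {\<omega>. length \<omega> = Suc n \<and> set \<omega> \<subseteq> D \<and> \<omega> ! 0 \<in> A \<and> \<omega> ! n \<in> B \<and>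
          (\<forall>k<n. f (\<omega> ! k) (\<omega> ! Suc k) > 0 \<and> (\<omega> ! k, \<omega> ! Suc k) \<in> C)}"

definition AB_connected ::
  "'a set \<Rightarrow> 'a set \<Rightarrow> 'a set \<Rightarrow> ('a \<Rightarrow> 'a \<Rightarrow> real) \<Rightarrow> ('a \<times> 'a) set \<Rightarrow> bool" where
  "AB_connected D A B f C \<longleftrightarrow> (\<exists>n. trans_paths D A B f n C \<noteq> {})"

definition level_set :: "'a set \<Rightarrow> ('a \<Rightarrow> 'a \<Rightarrow> real) \<Rightarrow> real \<Rightarrow> ('a \<times> 'a) set" where
  "level_set D f z = {(x,y). x \<in> D \<and> y \<in> D \<and> f x y \<ge> z}"

definition competency :: "'a set \<Rightarrow> 'a set \<Rightarrow> 'a set \<Rightarrow> ('a \<Rightarrow> 'a \<Rightarrow> real) \<Rightarrow> real" where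
  "competency D A B f = Sup {z. z \<ge> 0 \<and> AB_connected D A B f (level_set D f z)}"

definition Phi :: "'a set \<Rightarrow> ('a \<Rightarrow> 'a \<Rightarrow> real) \<Rightarrow> real \<Rightarrow> 'a set \<Rightarrow> 'a set" where
  "Phi D f z C = (\<Union>x\<in>C. {y\<in>D. (x,y) \<in> level_set D f z})"

definition Nz :: "'a set \<Rightarrow> 'a set \<Rightarrow> 'a set \<Rightarrow> ('a \<Rightarrow> 'a \<Rightarrow> real) \<Rightarrow> real \<Rightarrow> nat" where
  "Nz D A B f z = (LEAST n. n \<ge> 1 \<and> (Phi D f z ^^ n) A \<inter> B \<noteq> {})"

text \<open>Wdown D A B f z n k = W^{n,n-k}_z (downward recursion from i = n).\<close>
primrec Wdown :: "'a set \<Rightarrow> 'a set \<Rightarrow> 'a set \<Rightarrow> ('a \<Rightarrow> 'a \<Rightarrow> real) \<Rightarrow> real \<Rightarrow> nat \<Rightarrow> nat \<Rightarrow> 'a set" where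
  "Wdown D A B f z n 0 = (Phi D f z ^^ n) A \<inter> B"
| "Wdown D A B f z n (Suc k) =
     {x \<in> (Phi D f z ^^ (n - Suc k)) A. Phi D f z {x} \<inter> Wdown D A B f z n k \<noteq> {}}"

definition W :: "'a set \<Rightarrow> 'a set \<Rightarrow> 'a set \<Rightarrow> ('a \<Rightarrow> 'a \<Rightarrow> real) \<Rightarrow> real \<Rightarrow> nat \<Rightarrow> nat \<Rightarrow> 'a set" where
  "W D A B f z n i = Wdown D A B f z n (n - i)"

end

theory Submission
  imports Defs
begin

text \<open>\<open>\<Phi>\<^sup>i\<^sub>z(A)\<close> is the image of \<open>A\<close> under the \<open>i\<close>-th power of the relation \<open>L\<^sub>z\<close>, and the
  backward recursion shows that \<open>W\<^sup>n\<^sup>,\<^sup>i\<^sub>z\<close> consists of the points of \<open>\<Phi>\<^sup>i\<^sub>z(A)\<close> from which \<open>B\<close>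
  is reached in \<open>n - i\<close> steps of \<open>L\<^sub>z\<close>. A point with both properties lies on an \<open>A\<close>-\<open>B\<close> path
  of length \<open>n\<close> obtained by concatenating the two chains, and conversely the two halves of a
  transition path witness both properties of its \<open>i\<close>-th point. For \<open>z > 0\<close> every edge of
  \<open>L\<^sub>z\<close> carries positive flux, so these chains are exactly the transition paths in \<open>L\<^sub>z\<close>.\<close>

lemma Phi_eq_Image: "Phi D f z C = level_set D f z `` C"
  by (auto simp: Phi_def level_set_def)

lemma Phi_funpow_eq_relpow_Image: "(Phi D f z ^^ n) A = (level_set D f z ^^ n) `` A"
  by (induction n) (auto simp: Phi_eq_Image)

lemma Wdown_eq:
  assumes "k \<le> n"
  shows "Wdown D A B f z n k =
    (level_set D f z ^^ (n - k)) `` A \<inter> ((level_set D f z ^^ k)\<inverse>) `` B"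
  using assms
proof (induction k)
  case 0
  show ?case by (auto simp: Phi_funpow_eq_relpow_Image)
next
  case (Suc k)
  let ?L = "level_set D f z"
  have forward: "(?L ^^ (n - k)) `` A = ?L `` ((?L ^^ (n - Suc k)) `` A)"
  proof -
    have "n - k = Suc (n - Suc k)"
      using Suc.prems by simp
    then show ?thesis by auto
  qed
  have backward: "((?L ^^ Suc k)\<inverse>) `` B = {x. ?L `` {x} \<inter> ((?L ^^ k)\<inverse>) `` B \<noteq> {}}"
    by (blast intro: relpow_Suc_I2 dest: relpow_Suc_D2)
  show ?case
    using Suc unfolding backward
    by (auto simp: Phi_eq_Image Phi_funpow_eq_relpow_Image forward simp del: relpow.simps)
qed

lemma W_eq:
  assumes "i \<le> n"
  shows "W D A B f z n i =
    (level_set D f z ^^ i) `` A \<inter> ((level_set D f z ^^ (n - i))\<inverse>) `` B"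
  using assms by (simp add: W_def Wdown_eq)

lemma relpow_concat_path:
  assumes "(a, x) \<in> R ^^ i" and "(x, b) \<in> R ^^ j"
  obtains w where "w 0 = a" "w i = x" "w (i + j) = b" "\<forall>k<i + j. (w k, w (Suc k)) \<in> R"
proof -
  obtain u where u: "u 0 = a" "u i = x" "\<forall>k<i. (u k, u (Suc k)) \<in> R"
    using assms(1) by (auto simp: relpow_fun_conv)
  obtain v where v: "v 0 = x" "v j = b" "\<forall>k<j. (v k, v (Suc k)) \<in> R"
    using assms(2) by (auto simp: relpow_fun_conv)
  define w where "w k = (if k \<le> i then u k else v (k - i))" for k
  have "(w k, w (Suc k)) \<in> R" if "k < i + j" for k
  proof (cases "k < i")
    case True
    then show ?thesis using u by (auto simp: w_def)
  next
    case False
    then have "w k = v (k - i)" "w (Suc k) = v (Suc (k - i))"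
      using u v by (auto simp: w_def Suc_diff_le)
    then show ?thesis using v that False by auto
  qed
  moreover have "w 0 = a" "w i = x" "w (i + j) = b"
    using u v by (auto simp: w_def)
  ultimately show ?thesis using that by blast
qed

lemma trans_paths_eq_chains:
  assumes "C \<subseteq> {(x, y). x \<in> D \<and> y \<in> D \<and> f x y > 0}" and "A \<subseteq> D"
  shows "trans_paths D A B f n C =
    {\<omega>. length \<omega> = Suc n \<and> \<omega> ! 0 \<in> A \<and> \<omega> ! n \<in> B \<and> (\<forall>k<n. (\<omega> ! k, \<omega> ! Suc k) \<in> C)}"
proof -
  have edge: "x \<in> D" "y \<in> D" "f x y > 0" if "(x, y) \<in> C" for x y
    using assms(1) that by auto
  have "set \<omega> \<subseteq> D"
    if "length \<omega> = Suc n" "\<omega> ! 0 \<in> A" "\<forall>k<n. (\<omega> ! k, \<omega> ! Suc k) \<in> C" for \<omega>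
  proof
    fix x assume "x \<in> set \<omega>"
    then obtain j where "j < length \<omega>" "x = \<omega> ! j"
      by (auto simp: in_set_conv_nth)
    then have j: "j < Suc n" "x = \<omega> ! j"
      using that(1) by simp_all
    show "x \<in> D"
    proof (cases j)
      case 0
      then show ?thesis using j that(2) assms(2) by auto
    next
      case (Suc m)
      then show ?thesis using j that(3) edge(2) by blast
    qed
  qed
  then show ?thesis
    unfolding trans_paths_def using edge(3) by auto
qed

lemma nth_image_chains:
  assumes "i \<le> n"
  shows "(\<lambda>\<omega>. \<omega> ! i) `
      {\<omega>. length \<omega> = Suc n \<and> \<omega> ! 0 \<in> A \<and> \<omega> ! n \<in> B \<and> (\<forall>k<n. (\<omega> ! k, \<omega> ! Suc k) \<in> C)}
    = (C ^^ i) `` A \<inter> ((C ^^ (n - i))\<inverse>) `` B"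
  (is "_ ` ?P = ?R")
proof
  show "(\<lambda>\<omega>. \<omega> ! i) ` ?P \<subseteq> ?R"
  proof (rule image_subsetI)
    fix \<omega> assume \<omega>: "\<omega> \<in> ?P"
    have "(\<omega> ! 0, \<omega> ! i) \<in> C ^^ i"
      unfolding relpow_fun_conv by (rule exI[of _ "(!) \<omega>"]) (use \<omega> assms in auto)
    moreover have "(\<omega> ! i, \<omega> ! n) \<in> C ^^ (n - i)"
      unfolding relpow_fun_conv by (rule exI[of _ "\<lambda>j. \<omega> ! (i + j)"]) (use \<omega> assms in auto)
    moreover have "\<omega> ! 0 \<in> A" "\<omega> ! n \<in> B"
      using \<omega> by simp_all
    ultimately show "\<omega> ! i \<in> ?R" by blast
  qed
next
  show "?R \<subseteq> (\<lambda>\<omega>. \<omega> ! i) ` ?P"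
  proof
    fix x assume "x \<in> ?R"
    then obtain a b where ab: "a \<in> A" "b \<in> B" and "(a, x) \<in> C ^^ i" "(x, b) \<in> C ^^ (n - i)"
      by blast
    from this(3,4) obtain w where w: "w 0 = a" "w i = x" "w (i + (n - i)) = b"
      and steps: "\<forall>k<i + (n - i). (w k, w (Suc k)) \<in> C"
      by (rule relpow_concat_path)
    define \<omega> where "\<omega> = map w [0..<Suc n]"
    have nth: "\<omega> ! k = w k" if "k \<le> n" for k
      using that unfolding \<omega>_def by (simp del: upt_Suc add: nth_map_upt)
    have "(\<omega> ! k, \<omega> ! Suc k) \<in> C" if "k < n" for k
      using that steps assms nth[of k] nth[of "Suc k"] by simp
    moreover have "\<omega> ! 0 \<in> A" "\<omega> ! n \<in> B"
      using ab w assms nth[of 0] nth[of n] by simp_all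
    ultimately have "\<omega> \<in> ?P"
      by (simp add: \<omega>_def)
    moreover have "\<omega> ! i = x"
      using assms w nth by simp
    ultimately show "x \<in> (\<lambda>\<omega>. \<omega> ! i) ` ?P" by (blast intro: image_eqI[OF sym])
  qed
qed

theorem mainTheorem1:
  fixes D A B :: "'a::euclidean_space set" and f :: "'a \<Rightarrow> 'a \<Rightarrow> real"
  assumes "compact D"
    and "closed A" and "closed B" and "A \<noteq> {}" and "B \<noteq> {}" and "A \<inter> B = {}"
    and "A \<union> B \<subset> D"
    and "admissible_flux D A B f"
    and "AB_connected D A B f (level_set D f (competency D A B f))"
  shows "\<forall>z n i. 0 < z \<and> z \<le> competency D A B f \<and> Nz D A B f z \<le> n \<and> i \<le> n \<longrightarrow>
           W D A B f z n i = (\<lambda>\<omega>. \<omega> ! i) ` trans_paths D A B f n (level_set D f z)"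
proof (intro allI impI)
  fix z :: real and n i :: nat
  assume "0 < z \<and> z \<le> competency D A B f \<and> Nz D A B f z \<le> n \<and> i \<le> n"
  then have "0 < z" and "i \<le> n" by auto
  then have "level_set D f z \<subseteq> {(x, y). x \<in> D \<and> y \<in> D \<and> f x y > 0}"
    by (auto simp: level_set_def)
  moreover have "A \<subseteq> D" using assms(7) by auto
  ultimately show "W D A B f z n i = (\<lambda>\<omega>. \<omega> ! i) ` trans_paths D A B f n (level_set D f z)"
    using \<open>i \<le> n\<close> by (simp add: W_eq trans_paths_eq_chains nth_image_chains)
qed

end
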